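(* Let $X$ and $Y$ be finite connected undirected graphs and $f:X\to Y$ a morphism which is a weak equivalence for the closed model on $\mathrm{UGph}$ defined by counting the family $(c^p_U)_{p\ge1}$, i.e. for every $p\ge1$ the map $\mathrm{Hom}_{\mathrm{UGph}}(c^p_U,X)\to\mathrm{Hom}_{\mathrm{UGph}}(c^p_U,Y)$, $h\mapsto f\circ h$, is bijective. Then $f$ is an isomorphism.
   Context: An undirected graph $X$ consists of a set of nodes $X(0)$, a set of half-arcs $X(1)$, maps $s,t:X(1)\to X(0)$ (source, target) and an involution $\iota$ of $X(1)$ with $s\circ\iota=t$ (fixed points of $\iota$ are allowed). A morphism $f:X\to Y$ is a pair $f_0:X(0)\to Y(0)$, $f_1:X(1)\to Y(1)$ with $f_0\circ s=s\circ f_1$, $f_0\circ t=t\circ f_1$, $f_1\circ\iota=\iota\circ f_1$; $\mathrm{UGph}$ is the resulting category. An arc is a pair $\{u,\iota(u)\}$; connectedness refers to the graph whose vertices are the nodes and whose edges join the source and target of each half-arc. For $p\ge1$, $c^p_U$ is the undirected graph with nodes $\mathbb{Z}/p\mathbb{Z}$ and half-arcs $[n]^+,[n]^-$ ($[n]\in\mathbb{Z}/p$), with $s([n]^+)=[n]$, $t([n]^+)=[n+1]$, $s([n]^-)=[n+1]$, $t([n]^-)=[n]$, $\iota([n]^+)=[n]^-$. *)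

theory Defs
  imports "HOL-Library.FuncSet"
begin

record ('v, 'a) ugraph =
  nodes :: "'v set"
  harcs :: "'a set"
  src   :: "'a \<Rightarrow> 'v"
  tgt   :: "'a \<Rightarrow> 'v"
  inv   :: "'a \<Rightarrow> 'a"

definition is_ugraph :: "('v, 'a) ugraph \<Rightarrow> bool" where
  "is_ugraph X \<longleftrightarrow>
     src X \<in> harcs X \<rightarrow> nodes X \<and>
     tgt X \<in> harcs X \<rightarrow> nodes X \<and>
     inv X \<in> harcs X \<rightarrow> harcs X \<and>
     (\<forall>u \<in> harcs X. inv X (inv X u) = u) \<and>
     (\<forall>u \<in> harcs X. src X (inv X u) = tgt X u)"

definition finite_ugraph :: "('v, 'a) ugraph \<Rightarrow> bool" where
  "finite_ugraph X \<longleftrightarrow> finite (nodes X) \<and> finite (harcs X)"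

definition adj_rel :: "('v, 'a) ugraph \<Rightarrow> ('v \<times> 'v) set" where
  "adj_rel X = {(src X u, tgt X u) | u. u \<in> harcs X}"

definition connected_ugraph :: "('v, 'a) ugraph \<Rightarrow> bool" where
  "connected_ugraph X \<longleftrightarrow> nodes X \<noteq> {} \<and>
     (\<forall>x \<in> nodes X. \<forall>y \<in> nodes X. (x, y) \<in> (adj_rel X \<union> (adj_rel X)\<inverse>)\<^sup>*)"

definition ugraph_mor ::
  "('v, 'a) ugraph \<Rightarrow> ('w, 'b) ugraph \<Rightarrow> ('v \<Rightarrow> 'w) \<Rightarrow> ('a \<Rightarrow> 'b) \<Rightarrow> bool" where
  "ugraph_mor X Y f0 f1 \<longleftrightarrow>
     f0 \<in> nodes X \<rightarrow> nodes Y \<and> f1 \<in> harcs X \<rightarrow> harcs Y \<and>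
     (\<forall>u \<in> harcs X. f0 (src X u) = src Y (f1 u)) \<and>
     (\<forall>u \<in> harcs X. f0 (tgt X u) = tgt Y (f1 u)) \<and>
     (\<forall>u \<in> harcs X. f1 (inv X u) = inv Y (f1 u))"

definition ugraph_iso ::
  "('v, 'a) ugraph \<Rightarrow> ('w, 'b) ugraph \<Rightarrow> ('v \<Rightarrow> 'w) \<Rightarrow> ('a \<Rightarrow> 'b) \<Rightarrow> bool" where
  "ugraph_iso X Y f0 f1 \<longleftrightarrow> ugraph_mor X Y f0 f1 \<and>
     (\<exists>g0 g1. ugraph_mor Y X g0 g1 \<and>
        (\<forall>x \<in> nodes X. g0 (f0 x) = x) \<and> (\<forall>u \<in> harcs X. g1 (f1 u) = u) \<and>
        (\<forall>y \<in> nodes Y. f0 (g0 y) = y) \<and> (\<forall>v \<in> harcs Y. f1 (g1 v) = v))"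

text \<open>The cycle graph c^p_U: nodes Z/pZ represented by {0..<p};
  half-arc [n]^+ is (n, True), [n]^- is (n, False).\<close>
definition cycU :: "nat \<Rightarrow> (nat, nat \<times> bool) ugraph" where
  "cycU p = \<lparr> nodes = {..<p},
              harcs = {..<p} \<times> UNIV,
              src = (\<lambda>(n, b). if b then n else (n + 1) mod p),
              tgt = (\<lambda>(n, b). if b then (n + 1) mod p else n),
              inv = (\<lambda>(n, b). (n, \<not> b)) \<rparr>"

text \<open>Hom(Z, X) as pairs of extensional maps (so that morphisms are identified
  by their values on carriers).\<close>
definition Hom ::
  "('u, 'c) ugraph \<Rightarrow> ('v, 'a) ugraph \<Rightarrow> (('u \<Rightarrow> 'v) \<times> ('c \<Rightarrow> 'a)) set" where
  "Hom Z X = {(h0, h1). ugraph_mor Z X h0 h1 \<and>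
                 h0 \<in> extensional (nodes Z) \<and> h1 \<in> extensional (harcs Z)}"

definition post_comp ::
  "('u, 'c) ugraph \<Rightarrow> ('v \<Rightarrow> 'w) \<Rightarrow> ('a \<Rightarrow> 'b)
     \<Rightarrow> ('u \<Rightarrow> 'v) \<times> ('c \<Rightarrow> 'a) \<Rightarrow> ('u \<Rightarrow> 'w) \<times> ('c \<Rightarrow> 'b)" where
  "post_comp Z f0 f1 h = (restrict (f0 \<circ> fst h) (nodes Z), restrict (f1 \<circ> snd h) (harcs Z))"

definition cyc_weak_equiv ::
  "('v, 'a) ugraph \<Rightarrow> ('w, 'b) ugraph \<Rightarrow> ('v \<Rightarrow> 'w) \<Rightarrow> ('a \<Rightarrow> 'b) \<Rightarrow> bool" where
  "cyc_weak_equiv X Y f0 f1 \<longleftrightarrow>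
     (\<forall>p \<ge> 1. bij_betw (post_comp (cycU p) f0 f1) (Hom (cycU p) X) (Hom (cycU p) Y))"

end

theory Submission
  imports Defs
begin

text \<open>A morphism \<open>c\<^sup>p\<^sub>U \<rightarrow> X\<close> is the same thing as a closed walk of length \<open>p\<close> in \<open>X\<close>, so a
  weak equivalence \<open>f\<close> lifts closed walks uniquely. Lifting the back-and-forth walks
  \<open>u, \<iota>u\<close> shows that \<open>f\<close> is bijective on half-arcs. If two distinct nodes \<open>x, x'\<close> had the
  same image, pick half-arcs \<open>u, u'\<close> leaving them (connectedness); the closed walk
  \<open>f u, \<iota>(f u), f u', \<iota>(f u')\<close> of length 4 lifts, by injectivity on half-arcs, only to
  \<open>u, \<iota>u, u', \<iota>u'\<close>, which is not a walk. Surjectivity on nodes follows from connectedness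
  of \<open>Y\<close>, and a morphism bijective on nodes and half-arcs is an isomorphism.\<close>

lemma ugraph_src_nodes: "is_ugraph X \<Longrightarrow> u \<in> harcs X \<Longrightarrow> src X u \<in> nodes X"
  and ugraph_tgt_nodes: "is_ugraph X \<Longrightarrow> u \<in> harcs X \<Longrightarrow> tgt X u \<in> nodes X"
  and ugraph_inv_harcs: "is_ugraph X \<Longrightarrow> u \<in> harcs X \<Longrightarrow> inv X u \<in> harcs X"
  and ugraph_inv_inv: "is_ugraph X \<Longrightarrow> u \<in> harcs X \<Longrightarrow> inv X (inv X u) = u"
  and ugraph_src_inv: "is_ugraph X \<Longrightarrow> u \<in> harcs X \<Longrightarrow> src X (inv X u) = tgt X u"
  by (auto simp: is_ugraph_def)

lemma ugraph_tgt_inv: "is_ugraph X \<Longrightarrow> u \<in> harcs X \<Longrightarrow> tgt X (inv X u) = src X u"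
  by (metis ugraph_inv_harcs ugraph_inv_inv ugraph_src_inv)

lemma ugraph_mor_nodes: "ugraph_mor X Y f0 f1 \<Longrightarrow> x \<in> nodes X \<Longrightarrow> f0 x \<in> nodes Y"
  and ugraph_mor_harcs: "ugraph_mor X Y f0 f1 \<Longrightarrow> u \<in> harcs X \<Longrightarrow> f1 u \<in> harcs Y"
  and ugraph_mor_src: "ugraph_mor X Y f0 f1 \<Longrightarrow> u \<in> harcs X \<Longrightarrow> f0 (src X u) = src Y (f1 u)"
  and ugraph_mor_tgt: "ugraph_mor X Y f0 f1 \<Longrightarrow> u \<in> harcs X \<Longrightarrow> f0 (tgt X u) = tgt Y (f1 u)"
  and ugraph_mor_inv: "ugraph_mor X Y f0 f1 \<Longrightarrow> u \<in> harcs X \<Longrightarrow> f1 (inv X u) = inv Y (f1 u)"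
  by (auto simp: ugraph_mor_def)

lemma bij_ugraph_mor_imp_iso:
  assumes X: "is_ugraph X" and f: "ugraph_mor X Y f0 f1"
    and bij0: "bij_betw f0 (nodes X) (nodes Y)" and bij1: "bij_betw f1 (harcs X) (harcs Y)"
  shows "ugraph_iso X Y f0 f1"
proof -
  define g0 where "g0 = inv_into (nodes X) f0"
  define g1 where "g1 = inv_into (harcs X) f1"
  have g0: "g0 y \<in> nodes X" "f0 (g0 y) = y" if "y \<in> nodes Y" for y
    using that bij0 by (auto simp: g0_def bij_betw_def inv_into_into f_inv_into_f)
  have g1: "g1 v \<in> harcs X" "f1 (g1 v) = v" if "v \<in> harcs Y" for v
    using that bij1 by (auto simp: g1_def bij_betw_def inv_into_into f_inv_into_f)
  have g0f0: "g0 (f0 x) = x" if "x \<in> nodes X" for x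
    using that bij0 by (simp add: g0_def bij_betw_def)
  have g1f1: "g1 (f1 u) = u" if "u \<in> harcs X" for u
    using that bij1 by (simp add: g1_def bij_betw_def)
  have "ugraph_mor Y X g0 g1"
    unfolding ugraph_mor_def
  proof (intro conjI ballI)
    fix v assume v: "v \<in> harcs Y"
    then have u: "g1 v \<in> harcs X" "f1 (g1 v) = v" by (fact g1)+
    show "g0 (src Y v) = src X (g1 v)"
      using ugraph_mor_src[OF f u(1)] u g0f0 ugraph_src_nodes[OF X u(1)] by metis
    show "g0 (tgt Y v) = tgt X (g1 v)"
      using ugraph_mor_tgt[OF f u(1)] u g0f0 ugraph_tgt_nodes[OF X u(1)] by metis
    show "g1 (inv Y v) = inv X (g1 v)"
      using ugraph_mor_inv[OF f u(1)] u g1f1 ugraph_inv_harcs[OF X u(1)] by metis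
  qed (use g0 g1 in blast)+
  then show ?thesis
    unfolding ugraph_iso_def using f g0 g1 g0f0 g1f1 by blast
qed

lemma connected_ugraph_harc_from:
  assumes conn: "connected_ugraph X" and X: "is_ugraph X"
    and x: "x \<in> nodes X" and x': "x' \<in> nodes X" and "x \<noteq> x'"
  obtains u where "u \<in> harcs X" "src X u = x"
proof -
  have "(x, x') \<in> (adj_rel X \<union> (adj_rel X)\<inverse>)\<^sup>*"
    using conn x x' unfolding connected_ugraph_def by blast
  then obtain z where "(x, z) \<in> adj_rel X \<union> (adj_rel X)\<inverse>"
    using \<open>x \<noteq> x'\<close> by (metis converse_rtranclE)
  then consider u where "u \<in> harcs X" "src X u = x" | u where "u \<in> harcs X" "tgt X u = x"
    unfolding adj_rel_def by blast
  then show ?thesis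
    by cases (use that ugraph_inv_harcs[OF X] ugraph_src_inv[OF X] in metis)+
qed

definition closed_walk :: "('v, 'a) ugraph \<Rightarrow> nat \<Rightarrow> (nat \<Rightarrow> 'a) \<Rightarrow> bool" where
  "closed_walk X p w \<longleftrightarrow>
     (\<forall>n < p. w n \<in> harcs X \<and> tgt X (w n) = src X (w (Suc n mod p)))"

definition closed_walk_hom ::
  "('v, 'a) ugraph \<Rightarrow> nat \<Rightarrow> (nat \<Rightarrow> 'a) \<Rightarrow> (nat \<Rightarrow> 'v) \<times> (nat \<times> bool \<Rightarrow> 'a)" where
  "closed_walk_hom X p w = (restrict (\<lambda>n. src X (w n)) {..<p},
      restrict (\<lambda>(n, b). if b then w n else inv X (w n)) ({..<p} \<times> UNIV))"

lemma cycU_simps [simp]: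
  "nodes (cycU p) = {..<p}" "harcs (cycU p) = {..<p} \<times> UNIV"
  "src (cycU p) = (\<lambda>(n, b). if b then n else (n + 1) mod p)"
  "tgt (cycU p) = (\<lambda>(n, b). if b then (n + 1) mod p else n)"
  "inv (cycU p) = (\<lambda>(n, b). (n, \<not> b))"
  by (simp_all add: cycU_def)

lemma closed_walk_hom_in_Hom:
  assumes X: "is_ugraph X" and "closed_walk X p w"
  shows "closed_walk_hom X p w \<in> Hom (cycU p) X"
proof -
  have w: "w n \<in> harcs X" "tgt X (w n) = src X (w (Suc n mod p))" if "n < p" for n
    using assms that by (auto simp: closed_walk_def)
  have "Suc n mod p < p" if "n < p" for n
    using that by simp
  then show ?thesis
    unfolding Hom_def closed_walk_hom_def ugraph_mor_def
    using w ugraph_inv_inv[OF X] ugraph_src_inv[OF X] ugraph_tgt_inv[OF X]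
      ugraph_inv_harcs[OF X] ugraph_src_nodes[OF X]
    by (auto simp: Pi_def)
qed

lemma closed_walk_of_Hom:
  assumes "h \<in> Hom (cycU p) X"
  shows "closed_walk X p (\<lambda>n. snd h (n, True))"
  unfolding closed_walk_def
proof (intro allI impI conjI)
  fix n assume n: "n < p"
  have h: "ugraph_mor (cycU p) X (fst h) (snd h)"
    using assms by (auto simp: Hom_def)
  show "snd h (n, True) \<in> harcs X"
    using ugraph_mor_harcs[OF h] n by simp
  have "tgt X (snd h (n, True)) = fst h (Suc n mod p)"
    using ugraph_mor_tgt[OF h, of "(n, True)"] n by simp
  also have "\<dots> = src X (snd h (Suc n mod p, True))"
    using ugraph_mor_src[OF h, of "(Suc n mod p, True)"] n by simp
  finally show "tgt X (snd h (n, True)) = src X (snd h (Suc n mod p, True))" .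
qed

lemma snd_closed_walk_hom: "n < p \<Longrightarrow> snd (closed_walk_hom X p w) (n, True) = w n"
  by (simp add: closed_walk_hom_def)

lemma closed_walk_hom_cong:
  "(\<And>n. n < p \<Longrightarrow> w n = w' n) \<Longrightarrow> closed_walk_hom X p w = closed_walk_hom X p w'"
  by (auto simp: closed_walk_hom_def restrict_def)

lemma post_comp_closed_walk_hom:
  assumes f: "ugraph_mor X Y f0 f1" and w: "\<And>n. n < p \<Longrightarrow> w n \<in> harcs X"
  shows "post_comp (cycU p) f0 f1 (closed_walk_hom X p w) = closed_walk_hom Y p (f1 \<circ> w)"
  using w ugraph_mor_src[OF f] ugraph_mor_inv[OF f]
  unfolding post_comp_def closed_walk_hom_def
  by (auto intro!: ext simp: restrict_def)

lemma closed_walk_lift: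
  assumes Y: "is_ugraph Y" and f: "ugraph_mor X Y f0 f1"
    and surj: "post_comp (cycU p) f0 f1 ` Hom (cycU p) X = Hom (cycU p) Y"
    and w: "closed_walk Y p w"
  obtains v where "closed_walk X p v" "\<And>n. n < p \<Longrightarrow> f1 (v n) = w n"
proof -
  obtain h where h: "h \<in> Hom (cycU p) X"
    and fh: "post_comp (cycU p) f0 f1 h = closed_walk_hom Y p w"
    using closed_walk_hom_in_Hom[OF Y w] surj by (metis imageE)
  have "f1 (snd h (n, True)) = w n" if "n < p" for n
    using arg_cong[OF fh, of "\<lambda>k. snd k (n, True)"] that
    by (simp add: post_comp_def snd_closed_walk_hom)
  then show ?thesis
    using that closed_walk_of_Hom[OF h] by blast
qed

lemma closed_walk_lift_unique:
  assumes X: "is_ugraph X" and f: "ugraph_mor X Y f0 f1"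
    and inj: "inj_on (post_comp (cycU p) f0 f1) (Hom (cycU p) X)"
    and v: "closed_walk X p v" and v': "closed_walk X p v'"
    and eq: "\<And>n. n < p \<Longrightarrow> f1 (v n) = f1 (v' n)" and "n < p"
  shows "v n = v' n"
proof -
  have harcs: "v n \<in> harcs X" "v' n \<in> harcs X" if "n < p" for n
    using v v' that by (auto simp: closed_walk_def)
  have "post_comp (cycU p) f0 f1 (closed_walk_hom X p v) = closed_walk_hom Y p (f1 \<circ> v)"
    using harcs by (simp add: post_comp_closed_walk_hom[OF f])
  also have "\<dots> = closed_walk_hom Y p (f1 \<circ> v')"
    using eq by (intro closed_walk_hom_cong) simp
  also have "\<dots> = post_comp (cycU p) f0 f1 (closed_walk_hom X p v')"
    using harcs by (simp add: post_comp_closed_walk_hom[OF f])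
  finally have "closed_walk_hom X p v = closed_walk_hom X p v'"
    using inj closed_walk_hom_in_Hom[OF X v] closed_walk_hom_in_Hom[OF X v'] by (meson inj_onD)
  then show ?thesis
    using \<open>n < p\<close> by (metis snd_closed_walk_hom)
qed

lemma closed_walk_back_and_forth:
  assumes X: "is_ugraph X" and u: "u \<in> harcs X"
  shows "closed_walk X 2 (\<lambda>n. if n = 0 then u else inv X u)" (is "closed_walk X 2 ?w")
  unfolding closed_walk_def
proof (intro allI impI)
  fix n :: nat assume "n < 2"
  then consider "n = 0" | "n = 1"
    by linarith
  then show "?w n \<in> harcs X \<and> tgt X (?w n) = src X (?w (Suc n mod 2))"
    by cases (simp_all add: u ugraph_inv_harcs[OF X] ugraph_src_inv[OF X] ugraph_tgt_inv[OF X])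
qed

lemma closed_walk_two_loops:
  assumes X: "is_ugraph X" and a: "a \<in> harcs X" and b: "b \<in> harcs X"
    and ab: "src X a = src X b"
  shows "closed_walk X 4
    (\<lambda>n. if n = 0 then a else if n = 1 then inv X a else if n = 2 then b else inv X b)"
    (is "closed_walk X 4 ?w")
  unfolding closed_walk_def
proof (intro allI impI)
  fix n :: nat assume "n < 4"
  then consider "n = 0" | "n = 1" | "n = 2" | "n = 3"
    by linarith
  then show "?w n \<in> harcs X \<and> tgt X (?w n) = src X (?w (Suc n mod 4))"
    by cases (simp_all add: a b ab ugraph_inv_harcs[OF X] ugraph_src_inv[OF X] ugraph_tgt_inv[OF X])
qed

lemma cyc_weak_equiv_bij_harcs:
  assumes X: "is_ugraph X" and Y: "is_ugraph Y" and f: "ugraph_mor X Y f0 f1"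
    and we: "cyc_weak_equiv X Y f0 f1"
  shows "bij_betw f1 (harcs X) (harcs Y)"
proof -
  define bf where "bf u = (\<lambda>n::nat. if n = 0 then u else inv X u)" for u
  have post2: "bij_betw (post_comp (cycU 2) f0 f1) (Hom (cycU 2) X) (Hom (cycU 2) Y)"
    using we by (simp add: cyc_weak_equiv_def)
  have "inj_on f1 (harcs X)"
  proof (rule inj_onI)
    fix u u' assume u: "u \<in> harcs X" and u': "u' \<in> harcs X" and "f1 u = f1 u'"
    then have "f1 (bf u n) = f1 (bf u' n)" for n
      by (simp add: bf_def ugraph_mor_inv[OF f])
    then have "bf u 0 = bf u' 0"
      using post2 closed_walk_back_and_forth[OF X] u u'
      by (intro closed_walk_lift_unique[OF X f]) (auto simp: bf_def bij_betw_def)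
    then show "u = u'"
      by (simp add: bf_def)
  qed
  moreover have "harcs Y \<subseteq> f1 ` harcs X"
  proof
    fix v assume "v \<in> harcs Y"
    then obtain w where "closed_walk X 2 w" "f1 (w 0) = v"
      using closed_walk_lift[OF Y f _ closed_walk_back_and_forth[OF Y]] post2
      by (metis bij_betw_def zero_less_numeral)
    then show "v \<in> f1 ` harcs X"
      by (auto simp: closed_walk_def)
  qed
  ultimately show ?thesis
    using ugraph_mor_harcs[OF f] by (auto simp: bij_betw_def)
qed

lemma cyc_weak_equiv_inj_nodes:
  assumes X: "is_ugraph X" and Y: "is_ugraph Y" and "connected_ugraph X"
    and f: "ugraph_mor X Y f0 f1" and we: "cyc_weak_equiv X Y f0 f1"
  shows "inj_on f0 (nodes X)"
proof (rule inj_onI, rule ccontr)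
  fix x x' assume x: "x \<in> nodes X" and x': "x' \<in> nodes X" and "f0 x = f0 x'" and "x \<noteq> x'"
  obtain u where u: "u \<in> harcs X" "src X u = x"
    using connected_ugraph_harc_from[OF assms(3) X x x' \<open>x \<noteq> x'\<close>] .
  obtain u' where u': "u' \<in> harcs X" "src X u' = x'"
    using connected_ugraph_harc_from[OF assms(3) X x' x] \<open>x \<noteq> x'\<close> by metis
  have "src Y (f1 u) = src Y (f1 u')"
    using ugraph_mor_src[OF f] u u' \<open>f0 x = f0 x'\<close> by metis
  moreover have "post_comp (cycU 4) f0 f1 ` Hom (cycU 4) X = Hom (cycU 4) Y"
    using we by (simp add: cyc_weak_equiv_def bij_betw_def)
  ultimately obtain v where v: "closed_walk X 4 v"
    and fv: "\<And>n. n < 4 \<Longrightarrow> f1 (v n) =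
      (if n = 0 then f1 u else if n = 1 then inv Y (f1 u) else if n = 2 then f1 u' else inv Y (f1 u'))"
    using closed_walk_lift[OF Y f _ closed_walk_two_loops[OF Y]] u u' ugraph_mor_harcs[OF f]
    by blast
  have inj1: "inj_on f1 (harcs X)"
    using cyc_weak_equiv_bij_harcs[OF X Y f we] by (simp add: bij_betw_def)
  have vX: "v n \<in> harcs X" if "n < 4" for n
    using v that by (simp add: closed_walk_def)
  have "f1 (v 1) = f1 (inv X u)" "f1 (v 2) = f1 u'"
    using fv[of 1] fv[of 2] ugraph_mor_inv[OF f u(1)] by simp_all
  then have "v 1 = inv X u" "v 2 = u'"
    using inj_onD[OF inj1] vX ugraph_inv_harcs[OF X u(1)] u' by simp_all
  moreover have "tgt X (v 1) = src X (v 2)"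
    using v by (simp add: closed_walk_def numeral_2_eq_2)
  ultimately show False
    using u u' \<open>x \<noteq> x'\<close> ugraph_tgt_inv[OF X u(1)] by simp
qed

lemma ugraph_mor_surj_nodes:
  assumes X: "is_ugraph X" and Y: "is_ugraph Y" and "connected_ugraph Y" and "nodes X \<noteq> {}"
    and f: "ugraph_mor X Y f0 f1" and surj1: "f1 ` harcs X = harcs Y"
  shows "f0 ` nodes X = nodes Y"
proof
  show "f0 ` nodes X \<subseteq> nodes Y"
    using ugraph_mor_nodes[OF f] by blast
  show "nodes Y \<subseteq> f0 ` nodes X"
  proof
    fix y assume y: "y \<in> nodes Y"
    obtain x0 where x0: "x0 \<in> nodes X"
      using \<open>nodes X \<noteq> {}\<close> by blast
    show "y \<in> f0 ` nodes X"
    proof (cases "y = f0 x0")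
      case False
      then obtain v where "v \<in> harcs Y" "src Y v = y"
        using connected_ugraph_harc_from[OF assms(3) Y y ugraph_mor_nodes[OF f x0]] by metis
      then obtain u where "u \<in> harcs X" "y = f0 (src X u)"
        using surj1 ugraph_mor_src[OF f] by (metis imageE)
      then show ?thesis
        using ugraph_src_nodes[OF X] by blast
    qed (use x0 in blast)
  qed
qed

theorem proposition4p8:
  fixes X :: "('v, 'a) ugraph" and Y :: "('w, 'b) ugraph"
    and f0 :: "'v \<Rightarrow> 'w" and f1 :: "'a \<Rightarrow> 'b"
  assumes "is_ugraph X" and "is_ugraph Y"
    and "finite_ugraph X" and "finite_ugraph Y"
    and "connected_ugraph X" and "connected_ugraph Y"
    and "ugraph_mor X Y f0 f1"
    and "cyc_weak_equiv X Y f0 f1"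
  shows "ugraph_iso X Y f0 f1"
proof -
  have harcs: "bij_betw f1 (harcs X) (harcs Y)"
    using cyc_weak_equiv_bij_harcs assms by blast
  have "f0 ` nodes X = nodes Y"
    using ugraph_mor_surj_nodes[of X Y f0 f1] harcs assms
    by (simp add: connected_ugraph_def bij_betw_def)
  moreover have "inj_on f0 (nodes X)"
    using cyc_weak_equiv_inj_nodes assms by blast
  ultimately show ?thesis
    using bij_ugraph_mor_imp_iso harcs assms by (blast intro: bij_betw_imageI)
qed

end
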